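(* For all integers $m\ge2$, $n\ge2$ there exists a proportional mechanism $(A,p)$ for the job scheduling problem over the set $\mathcal{N}$ of normalized instances with $m$ machines and $n$ jobs such that $\max_{i\in[m]}c_i(A(c)_i)=\mathrm{OPT}(c)$ for every $c\in\mathcal{N}$.
   Context: Notation: $[k]=\{1,\dots,k\}$. An instance is a matrix $c\in\mathbb{R}_{\ge0}^{m\times n}$; for $S\subseteq[n]$, $c_i(S)=\sum_{j\in S}c_{i,j}$. The set of normalized instances is $\mathcal{N}=\{c\in\mathbb{R}_{\ge0}^{m\times n}: \exists C \text{ with } c_i([n])=C\text{ for all } i\in[m]\}$. An allocation is a tuple $(X_1,\dots,X_m)$ of pairwise disjoint subsets of $[n]$ whose union is $[n]$. A mechanism $(A,p)$ over a set of instances $\mathcal{I}$ assigns to each $c\in\mathcal{I}$ an allocation $A(c)$ and payments $p(c)\in\mathbb{R}^m$ (written $A_i,p_i$). It is proportional if for every $c\in\mathcal{I}$ and $i\in[m]$: $c_i(A_i)-p_i\le\frac1m\sum_{j\in[m]}(c_i(A_j)-p_j)$. $\mathrm{OPT}(c)=\min_X\max_{i\in[m]}c_i(X_i)$ over all allocations $X$. *)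

theory Defs
  imports "HOL-Analysis.Analysis"
begin

text \<open>An instance is a cost matrix
  c :: nat => nat => real, where c i j is the cost of job j on machine i; entries
  outside {1..m} x {1..n} are required to be 0 so that instances correspond exactly
  to matrices in R^{m x n}.\<close>

definition cost :: "(nat \<Rightarrow> nat \<Rightarrow> real) \<Rightarrow> nat \<Rightarrow> nat set \<Rightarrow> real" where
  "cost c i S = (\<Sum>j\<in>S. c i j)"

definition is_instance :: "nat \<Rightarrow> nat \<Rightarrow> (nat \<Rightarrow> nat \<Rightarrow> real) \<Rightarrow> bool" where
  "is_instance m n c \<longleftrightarrow>
     (\<forall>i j. c i j \<ge> 0) \<and> (\<forall>i j. (i \<notin> {1..m} \<or> j \<notin> {1..n}) \<longrightarrow> c i j = 0)"

definition normalized_instances :: "nat \<Rightarrow> nat \<Rightarrow> (nat \<Rightarrow> nat \<Rightarrow> real) set" where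
  "normalized_instances m n =
     {c. is_instance m n c \<and> (\<exists>C. \<forall>i\<in>{1..m}. cost c i {1..n} = C)}"

definition is_allocation :: "nat \<Rightarrow> nat \<Rightarrow> (nat \<Rightarrow> nat set) \<Rightarrow> bool" where
  "is_allocation m n X \<longleftrightarrow>
     (\<forall>i\<in>{1..m}. \<forall>k\<in>{1..m}. i \<noteq> k \<longrightarrow> X i \<inter> X k = {}) \<and>
     (\<Union>i\<in>{1..m}. X i) = {1..n} \<and>
     (\<forall>i. i \<notin> {1..m} \<longrightarrow> X i = {})"

definition OPT :: "nat \<Rightarrow> nat \<Rightarrow> (nat \<Rightarrow> nat \<Rightarrow> real) \<Rightarrow> real" where
  "OPT m n c = (INF X\<in>{X. is_allocation m n X}. Max ((\<lambda>i. cost c i (X i)) ` {1..m}))"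

definition proportional_mechanism ::
  "nat \<Rightarrow> nat \<Rightarrow> (nat \<Rightarrow> nat \<Rightarrow> real) set \<Rightarrow>
   ((nat \<Rightarrow> nat \<Rightarrow> real) \<Rightarrow> nat \<Rightarrow> nat set) \<Rightarrow>
   ((nat \<Rightarrow> nat \<Rightarrow> real) \<Rightarrow> nat \<Rightarrow> real) \<Rightarrow> bool" where
  "proportional_mechanism m n I A p \<longleftrightarrow>
     (\<forall>c\<in>I. is_allocation m n (A c) \<and>
        (\<forall>i\<in>{1..m}. cost c i (A c i) - p c i
            \<le> (1 / real m) * (\<Sum>j\<in>{1..m}. cost c i (A c j) - p c j)))"

end

theory Submission imports Defs begin

text \<open>Among the makespan-optimal allocations take one, X, of least social cost
  \<open>\<Sum>i. c\<^sub>i(X\<^sub>i)\<close>. Then some machine k values every bundle at least as much as its owner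
  does: otherwise every machine k points to a bundle it finds strictly cheaper than its owner,
  and shifting the bundles along a cycle of this map keeps the makespan optimal while lowering
  the social cost. Hence the social cost is at most \<open>c\<^sub>k([n]) = C\<close>. Charging every machine
  \<open>c\<^sub>i(X\<^sub>i) - C/m\<close> leaves each net cost at C/m, while machine i's average over all bundles is
  \<open>(2C - social cost)/m \<ge> C/m\<close>.\<close>

lemma finite_self_map_has_cycle:
  fixes f :: "'a \<Rightarrow> 'a"
  assumes "finite A" and "A \<noteq> {}" and "f ` A \<subseteq> A"
  obtains P where "P \<subseteq> A" and "P \<noteq> {}" and "bij_betw f P P"
proof -
  let ?closed = "\<lambda>P. P \<subseteq> A \<and> P \<noteq> {} \<and> f ` P \<subseteq> P"
  obtain P where P: "?closed P" and least: "\<And>Q. ?closed Q \<Longrightarrow> card P \<le> card Q"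
    using ex_has_least_nat[of ?closed A card] assms by blast
  have "finite P"
    using P assms(1) finite_subset by blast
  have "?closed (f ` P)"
    using P by auto
  then have "card P \<le> card (f ` P)"
    by (rule least)
  with card_image_le[OF \<open>finite P\<close>, of f] have card_eq: "card (f ` P) = card P"
    by linarith
  then have "f ` P = P"
    using card_subset_eq[OF \<open>finite P\<close>] P by blast
  moreover have "inj_on f P"
    using eq_card_imp_inj_on[OF \<open>finite P\<close> card_eq] .
  ultimately show thesis
    using that P by (auto simp: bij_betw_def)
qed

lemma bij_betw_extend_by_id:
  assumes "bij_betw f P P" and "P \<subseteq> A"
  shows "bij_betw (\<lambda>x. if x \<in> P then f x else x) A A"
proof -
  have "bij_betw (\<lambda>x. if x \<in> P then f x else x) (P \<union> (A - P)) (P \<union> (A - P))"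
    using assms(1) bij_betw_id[unfolded id_def] by (rule bij_betw_disjoint_Un) auto
  then show ?thesis
    using assms(2) by (simp add: Un_absorb1)
qed

definition makespan :: "nat \<Rightarrow> (nat \<Rightarrow> nat \<Rightarrow> real) \<Rightarrow> (nat \<Rightarrow> nat set) \<Rightarrow> real" where
  "makespan m c X = Max ((\<lambda>i. cost c i (X i)) ` {1..m})"

definition social_cost :: "nat \<Rightarrow> (nat \<Rightarrow> nat \<Rightarrow> real) \<Rightarrow> (nat \<Rightarrow> nat set) \<Rightarrow> real" where
  "social_cost m c X = (\<Sum>i\<in>{1..m}. cost c i (X i))"

definition optimal_allocations ::
  "nat \<Rightarrow> nat \<Rightarrow> (nat \<Rightarrow> nat \<Rightarrow> real) \<Rightarrow> (nat \<Rightarrow> nat set) set" where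
  "optimal_allocations m n c = {X. is_allocation m n X \<and> makespan m c X = OPT m n c}"

lemma allocation_bundle_subset: "is_allocation m n X \<Longrightarrow> X i \<subseteq> {1..n}"
  unfolding is_allocation_def by (cases "i \<in> {1..m}") auto

lemma finite_allocations: "finite {X. is_allocation m n X}"
proof (rule finite_subset)
  let ?F = "{X. \<forall>i. (i \<in> {1..m} \<longrightarrow> X i \<in> Pow {1..n}) \<and> (i \<notin> {1..m} \<longrightarrow> X i = {})}"
  show "{X. is_allocation m n X} \<subseteq> ?F"
    using allocation_bundle_subset by (auto simp: is_allocation_def)
  show "finite ?F"
    by (rule finite_set_of_finite_funs) auto
qed

lemma is_allocation_single_machine: "1 \<le> m \<Longrightarrow> is_allocation m n (\<lambda>i. if i = 1 then {1..n} else {})"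
  unfolding is_allocation_def by auto

lemma is_allocation_permute:
  assumes X: "is_allocation m n X" and \<sigma>: "bij_betw \<sigma> {1..m} {1..m}"
    and fixed: "\<And>i. i \<notin> {1..m} \<Longrightarrow> \<sigma> i = i"
  shows "is_allocation m n (X \<circ> \<sigma>)"
  unfolding is_allocation_def
proof (intro conjI ballI impI allI)
  fix i k assume ik: "i \<in> {1..m}" "k \<in> {1..m}" "i \<noteq> k"
  then have "\<sigma> i \<noteq> \<sigma> k"
    using \<sigma> by (metis bij_betw_inv_into_left)
  moreover have "\<sigma> i \<in> {1..m}" "\<sigma> k \<in> {1..m}"
    using ik \<sigma> bij_betwE by blast+
  ultimately show "(X \<circ> \<sigma>) i \<inter> (X \<circ> \<sigma>) k = {}"
    using X unfolding is_allocation_def by simp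
next
  have "(\<Union>i\<in>{1..m}. (X \<circ> \<sigma>) i) = (\<Union>j\<in>\<sigma> ` {1..m}. X j)"
    by (simp add: image_comp)
  also have "\<dots> = {1..n}"
    using X \<sigma> by (simp add: is_allocation_def bij_betw_def)
  finally show "(\<Union>i\<in>{1..m}. (X \<circ> \<sigma>) i) = {1..n}" .
next
  fix i assume "i \<notin> {1..m}"
  then show "(X \<circ> \<sigma>) i = {}"
    using X fixed unfolding is_allocation_def by simp
qed

lemma cost_eq_sum_bundles:
  assumes "is_allocation m n X"
  shows "cost c k {1..n} = (\<Sum>j\<in>{1..m}. cost c k (X j))"
proof -
  have "{1..n} = (\<Union>j\<in>{1..m}. X j)"
    using assms unfolding is_allocation_def by simp
  moreover have "finite (X j)" for j
    using allocation_bundle_subset[OF assms] finite_subset by blast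
  ultimately show ?thesis
    using assms unfolding cost_def is_allocation_def by (simp add: sum.UNION_disjoint)
qed

lemma OPT_eq_Min:
  assumes "1 \<le> m"
  shows "OPT m n c = Min (makespan m c ` {X. is_allocation m n X})"
  unfolding OPT_def makespan_def[abs_def]
  using finite_allocations is_allocation_single_machine[OF assms] by (intro cInf_eq_Min) auto

lemma OPT_le_makespan: "1 \<le> m \<Longrightarrow> is_allocation m n X \<Longrightarrow> OPT m n c \<le> makespan m c X"
  using OPT_eq_Min finite_allocations by simp

lemma exists_optimal_allocation_of_least_social_cost:
  assumes "1 \<le> m"
  shows "\<exists>X\<in>optimal_allocations m n c.
           \<forall>Y\<in>optimal_allocations m n c. social_cost m c X \<le> social_cost m c Y"
proof -
  have "OPT m n c \<in> makespan m c ` {X. is_allocation m n X}"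
    unfolding OPT_eq_Min[OF assms]
    using finite_allocations is_allocation_single_machine[OF assms] by (intro Min_in) auto
  then have "optimal_allocations m n c \<noteq> {}"
    unfolding optimal_allocations_def by auto
  moreover have "finite (optimal_allocations m n c)"
    unfolding optimal_allocations_def using finite_allocations by (rule finite_subset[rotated]) auto
  ultimately show ?thesis
    using arg_min_if_finite[of "optimal_allocations m n c" "social_cost m c"]
    by (metis not_less)
qed

lemma permuted_allocation_improves:
  assumes "1 \<le> m" and \<sigma>: "bij_betw \<sigma> {1..m} {1..m}"
    and le: "\<And>i. i \<in> {1..m} \<Longrightarrow> cost c i (X (\<sigma> i)) \<le> cost c (\<sigma> i) (X (\<sigma> i))"
    and lt: "\<exists>i\<in>{1..m}. cost c i (X (\<sigma> i)) < cost c (\<sigma> i) (X (\<sigma> i))"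
  shows "makespan m c (X \<circ> \<sigma>) \<le> makespan m c X"
    and "social_cost m c (X \<circ> \<sigma>) < social_cost m c X"
proof -
  have \<sigma>_img: "\<sigma> ` {1..m} = {1..m}"
    using \<sigma> by (simp add: bij_betw_def)
  show "makespan m c (X \<circ> \<sigma>) \<le> makespan m c X"
    unfolding makespan_def
  proof (rule Max.boundedI)
    fix a assume "a \<in> (\<lambda>i. cost c i ((X \<circ> \<sigma>) i)) ` {1..m}"
    then obtain i where i: "i \<in> {1..m}" and a: "a = cost c i (X (\<sigma> i))"
      by auto
    have "cost c (\<sigma> i) (X (\<sigma> i)) \<le> Max ((\<lambda>i. cost c i (X i)) ` {1..m})"
      using i \<sigma>_img by (intro Max_ge) auto
    then show "a \<le> Max ((\<lambda>i. cost c i (X i)) ` {1..m})"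
      using le[OF i] a by linarith
  qed (use assms(1) in auto)
  have "social_cost m c (X \<circ> \<sigma>) < (\<Sum>i\<in>{1..m}. cost c (\<sigma> i) (X (\<sigma> i)))"
    unfolding social_cost_def using le lt by (intro sum_strict_mono_ex1) auto
  also have "\<dots> = social_cost m c X"
    unfolding social_cost_def using sum.reindex_bij_betw[OF \<sigma>] .
  finally show "social_cost m c (X \<circ> \<sigma>) < social_cost m c X" .
qed

lemma least_social_cost_optimum_has_dominant_machine:
  assumes m: "1 \<le> m" and X: "X \<in> optimal_allocations m n c"
    and least: "\<And>Y. Y \<in> optimal_allocations m n c \<Longrightarrow> social_cost m c X \<le> social_cost m c Y"
  shows "\<exists>k\<in>{1..m}. \<forall>j\<in>{1..m}. cost c j (X j) \<le> cost c k (X j)"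
proof (rule ccontr)
  assume "\<not> ?thesis"
  then obtain f where f: "\<And>k. k \<in> {1..m} \<Longrightarrow> f k \<in> {1..m} \<and> cost c k (X (f k)) < cost c (f k) (X (f k))"
    by (metis not_le)
  have "f ` {1..m} \<subseteq> {1..m}"
    using f by blast
  then obtain P where P: "P \<subseteq> {1..m}" "P \<noteq> {}" "bij_betw f P P"
    using finite_self_map_has_cycle[of "{1..m}" f] m by auto
  define \<sigma> where "\<sigma> = (\<lambda>i. if i \<in> P then f i else i)"
  have \<sigma>: "bij_betw \<sigma> {1..m} {1..m}"
    unfolding \<sigma>_def using bij_betw_extend_by_id[OF P(3,1)] .
  have le: "cost c i (X (\<sigma> i)) \<le> cost c (\<sigma> i) (X (\<sigma> i))" if "i \<in> {1..m}" for i
    using f[OF that] unfolding \<sigma>_def by auto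
  have lt: "\<exists>i\<in>{1..m}. cost c i (X (\<sigma> i)) < cost c (\<sigma> i) (X (\<sigma> i))"
    using f P(1,2) unfolding \<sigma>_def by fastforce
  have X_alloc: "is_allocation m n X" and X_opt: "makespan m c X = OPT m n c"
    using X unfolding optimal_allocations_def by auto
  have "\<sigma> i = i" if "i \<notin> {1..m}" for i
    using P(1) that unfolding \<sigma>_def by auto
  then have Y_alloc: "is_allocation m n (X \<circ> \<sigma>)"
    by (rule is_allocation_permute[OF X_alloc \<sigma>])
  have improves:
    "makespan m c (X \<circ> \<sigma>) \<le> makespan m c X" "social_cost m c (X \<circ> \<sigma>) < social_cost m c X"
    by (intro permuted_allocation_improves[OF m \<sigma>] le lt; assumption)+
  have "makespan m c (X \<circ> \<sigma>) = OPT m n c"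
    using OPT_le_makespan[OF m Y_alloc, of c] improves(1) X_opt by linarith
  with Y_alloc have "X \<circ> \<sigma> \<in> optimal_allocations m n c"
    unfolding optimal_allocations_def by blast
  with least improves(2) show False
    by fastforce
qed

lemma social_cost_le_cost_of_dominant_machine:
  assumes "is_allocation m n X" and "\<forall>j\<in>{1..m}. cost c j (X j) \<le> cost c k (X j)"
  shows "social_cost m c X \<le> cost c k {1..n}"
  unfolding social_cost_def cost_eq_sum_bundles[OF assms(1)] using assms(2) by (intro sum_mono) simp

lemma equal_share_payments_proportional:
  assumes "1 \<le> m" and X: "is_allocation m n X" and i: "i \<in> {1..m}"
    and C: "\<forall>k\<in>{1..m}. cost c k {1..n} = C" and social: "social_cost m c X \<le> C"
  shows "cost c i (X i) - (cost c i (X i) - C / m)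
           \<le> 1 / m * (\<Sum>j\<in>{1..m}. cost c i (X j) - (cost c j (X j) - C / m))"
proof -
  have "(\<Sum>j\<in>{1..m}. cost c i (X j) - (cost c j (X j) - C / m))
          = cost c i {1..n} - social_cost m c X + m * (C / m)"
    unfolding cost_eq_sum_bundles[OF X] social_cost_def by (simp add: sum_subtractf)
  also have "\<dots> = 2 * C - social_cost m c X"
    using C i \<open>1 \<le> m\<close> by simp
  finally show ?thesis
    using social \<open>1 \<le> m\<close> by (simp add: divide_right_mono)
qed

theorem theorem3:
  fixes m n :: nat
  assumes "m \<ge> 2" and "n \<ge> 2"
  shows "\<exists>A p. proportional_mechanism m n (normalized_instances m n) A p \<and>
           (\<forall>c\<in>normalized_instances m n.
              Max ((\<lambda>i. cost c i (A c i)) ` {1..m}) = OPT m n c)"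
proof -
  have m: "1 \<le> m" using assms(1) by simp
  define A where "A c = (SOME X. X \<in> optimal_allocations m n c \<and>
                   (\<forall>Y\<in>optimal_allocations m n c. social_cost m c X \<le> social_cost m c Y))" for c
  \<comment> \<open>On a normalized instance machine 1's total cost is the common total C.\<close>
  define p where "p c i = cost c i (A c i) - cost c 1 {1..n} / m" for c i
  have A: "A c \<in> optimal_allocations m n c"
    and A_least: "\<And>Y. Y \<in> optimal_allocations m n c \<Longrightarrow> social_cost m c (A c) \<le> social_cost m c Y" for c
    using someI_ex[OF exists_optimal_allocation_of_least_social_cost[OF m, of n c, unfolded Bex_def]]
    unfolding A_def by blast+
  have A_alloc: "is_allocation m n (A c)" for c
    using A unfolding optimal_allocations_def by blast
  have "proportional_mechanism m n (normalized_instances m n) A p"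
    unfolding proportional_mechanism_def
  proof (intro ballI conjI A_alloc)
    fix c i assume c: "c \<in> normalized_instances m n" and i: "i \<in> {1..m}"
    obtain C where C: "\<forall>k\<in>{1..m}. cost c k {1..n} = C"
      using c unfolding normalized_instances_def by auto
    obtain k where "k \<in> {1..m}" "\<forall>j\<in>{1..m}. cost c j (A c j) \<le> cost c k (A c j)"
      using least_social_cost_optimum_has_dominant_machine[OF m A A_least] by blast
    then have "social_cost m c (A c) \<le> C"
      using social_cost_le_cost_of_dominant_machine[OF A_alloc] C by metis
    with equal_share_payments_proportional[OF m A_alloc i C] C m
    show "cost c i (A c i) - p c i \<le> 1 / m * (\<Sum>j\<in>{1..m}. cost c i (A c j) - p c j)"
      unfolding p_def by simp
  qed
  moreover have "\<forall>c\<in>normalized_instances m n. Max ((\<lambda>i. cost c i (A c i)) ` {1..m}) = OPT m n c"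
    using A unfolding optimal_allocations_def makespan_def by blast
  ultimately show ?thesis
    by blast
qed

end
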